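(* Let $G=(V,E)$ be a finite, undirected, connected, unweighted graph, let $R\subseteq V$ be a set of landmarks, and let $\mathcal{L}=(M,L)$ be the labelling scheme of $G$ with respect to $R$ (defined in the context). For any two vertices $u,v\in V$, define $$d^{\top}_{uv}=\min\{\delta_{ur}+d_M(r,r')+\delta_{r'v} \mid (r,\delta_{ur})\in L(u),\ (r',\delta_{r'v})\in L(v)\},$$ with the convention $\min\emptyset=+\infty$. Then $d^{\top}_{uv}\geq d_G(u,v)$.
   Context: $d_G(x,y)$ denotes the shortest-path distance (number of edges) between $x$ and $y$ in $G$, and $P_{xy}$ denotes the set of all shortest paths between $x$ and $y$ in $G$; $V(p)$ is the vertex set of a path $p$. The meta-graph is $M=(R,E_R,\sigma)$, the edge-weighted graph on vertex set $R$ in which, for distinct $r,r'\in R$, $\{r,r'\}\in E_R$ iff at least one shortest path in $G$ between $r$ and $r'$ contains no vertex of $R$ other than $r$ and $r'$, and such an edge has weight $\sigma(r,r')=d_G(r,r')$. $d_M(r,r')$ denotes the weighted shortest-path distance between $r$ and $r'$ in $M$ (with $d_M(r,r)=0$ and $d_M(r,r')=+\infty$ if no path exists). The path labelling $L$ assigns to each $u\in V\setminus R$ the label $L(u)=\{(r,\delta_{ur}) \mid r\in R,\ \delta_{ur}=d_G(u,r),\ \exists p\in P_{ur}\text{ with } V(p)\cap R=\{r\}\}$, and to each landmark $u\in R$ the empty label $L(u)=\emptyset$. The pair $\mathcal{L}=(M,L)$ is the labelling scheme. *)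

theory Defs
  imports Main "HOL-Library.Extended_Nat"
begin

definition walk :: "'a set \<Rightarrow> ('a \<times> 'a) set \<Rightarrow> 'a list \<Rightarrow> 'a \<Rightarrow> 'a \<Rightarrow> bool" where
  "walk V E p x y \<longleftrightarrow> p \<noteq> [] \<and> hd p = x \<and> last p = y \<and> set p \<subseteq> V
     \<and> (\<forall>i. Suc i < length p \<longrightarrow> (p ! i, p ! Suc i) \<in> E)"

definition plen :: "'a list \<Rightarrow> nat" where
  "plen p = length p - 1"

definition finite_simple_graph :: "'a set \<Rightarrow> ('a \<times> 'a) set \<Rightarrow> bool" where
  "finite_simple_graph V E \<longleftrightarrow> finite V \<and> E \<subseteq> V \<times> V \<and> sym E \<and> irrefl E"

definition connected_graph :: "'a set \<Rightarrow> ('a \<times> 'a) set \<Rightarrow> bool" where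
  "connected_graph V E \<longleftrightarrow> (\<forall>x\<in>V. \<forall>y\<in>V. \<exists>p. walk V E p x y)"

definition gdist :: "'a set \<Rightarrow> ('a \<times> 'a) set \<Rightarrow> 'a \<Rightarrow> 'a \<Rightarrow> nat" where
  "gdist V E x y = (LEAST n. \<exists>p. walk V E p x y \<and> plen p = n)"

definition shortest_paths :: "'a set \<Rightarrow> ('a \<times> 'a) set \<Rightarrow> 'a \<Rightarrow> 'a \<Rightarrow> 'a list set" where
  "shortest_paths V E x y = {p. walk V E p x y \<and> plen p = gdist V E x y}"

definition meta_edge :: "'a set \<Rightarrow> ('a \<times> 'a) set \<Rightarrow> 'a set \<Rightarrow> 'a \<Rightarrow> 'a \<Rightarrow> bool" where
  "meta_edge V E R r r' \<longleftrightarrow> r \<in> R \<and> r' \<in> R \<and> r \<noteq> r'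
     \<and> (\<exists>p\<in>shortest_paths V E r r'. set p \<inter> R \<subseteq> {r, r'})"

definition meta_weight :: "'a set \<Rightarrow> ('a \<times> 'a) set \<Rightarrow> 'a \<Rightarrow> 'a \<Rightarrow> nat" where
  "meta_weight V E r r' = gdist V E r r'"

definition meta_walk :: "'a set \<Rightarrow> ('a \<times> 'a) set \<Rightarrow> 'a set \<Rightarrow> 'a list \<Rightarrow> 'a \<Rightarrow> 'a \<Rightarrow> bool" where
  "meta_walk V E R q r r' \<longleftrightarrow> q \<noteq> [] \<and> hd q = r \<and> last q = r' \<and> set q \<subseteq> R
     \<and> (\<forall>i. Suc i < length q \<longrightarrow> meta_edge V E R (q ! i) (q ! Suc i))"

definition meta_walk_weight :: "'a set \<Rightarrow> ('a \<times> 'a) set \<Rightarrow> 'a list \<Rightarrow> nat" where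
  "meta_walk_weight V E q = (\<Sum>i<length q - 1. meta_weight V E (q ! i) (q ! Suc i))"

(* d_M(r,r'): weighted shortest-path distance in M; Inf {} = \<infinity> *)
definition meta_dist :: "'a set \<Rightarrow> ('a \<times> 'a) set \<Rightarrow> 'a set \<Rightarrow> 'a \<Rightarrow> 'a \<Rightarrow> enat" where
  "meta_dist V E R r r' = Inf {enat (meta_walk_weight V E q) | q. meta_walk V E R q r r'}"

definition plabel :: "'a set \<Rightarrow> ('a \<times> 'a) set \<Rightarrow> 'a set \<Rightarrow> 'a \<Rightarrow> ('a \<times> nat) set" where
  "plabel V E R u = (if u \<in> R then {} else
     {(r, d). r \<in> R \<and> d = gdist V E u r \<and> (\<exists>p\<in>shortest_paths V E u r. set p \<inter> R = {r})})"

(* d^top_{uv}, with min {} = \<infinity> *)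
definition dtop :: "'a set \<Rightarrow> ('a \<times> 'a) set \<Rightarrow> 'a set \<Rightarrow> 'a \<Rightarrow> 'a \<Rightarrow> enat" where
  "dtop V E R u v = Inf {enat du + meta_dist V E R r r' + enat dv | r du r' dv.
      (r, du) \<in> plabel V E R u \<and> (r', dv) \<in> plabel V E R v}"

end

theory Submission
  imports Defs
begin

text \<open>Every candidate value of \<open>d\<^sup>\<top>\<^sub>u\<^sub>v\<close> is the length of a route
  \<open>u \<leadsto> r \<leadsto> r' \<leadsto> v\<close>: the two label entries are graph distances, and every walk
  in the meta-graph \<open>M\<close> is bounded below by the graph distance of its endpoints, because
  each meta-edge weighs exactly a graph distance and \<open>d\<^sub>G\<close> satisfies the triangle
  inequality.\<close>

lemma walk_iff_successively:
  "walk V E p x y \<longleftrightarrow>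
     p \<noteq> [] \<and> hd p = x \<and> last p = y \<and> set p \<subseteq> V \<and> successively (\<lambda>a b. (a, b) \<in> E) p"
  by (simp add: walk_def successively_conv_nth)

lemma walk_append:
  assumes "walk V E p x y" and "walk V E q y z"
  shows "walk V E (p @ tl q) x z"
proof -
  obtain q' where q: "q = y # q'"
    using assms(2) by (cases q) (auto simp: walk_iff_successively)
  show ?thesis
    using assms unfolding q walk_iff_successively
    by (auto simp: successively_append_iff successively_Cons)
qed

lemma plen_append_tl: "p \<noteq> [] \<Longrightarrow> q \<noteq> [] \<Longrightarrow> plen (p @ tl q) = plen p + plen q"
  by (cases p; cases q) (auto simp: plen_def)

lemma walk_rev:
  assumes "sym E" and "walk V E p x y"
  shows "walk V E (rev p) y x"
proof -
  have "successively (\<lambda>a b. (b, a) \<in> E) p"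
    using assms(2) by (auto simp: walk_iff_successively intro: successively_mono symD[OF assms(1)])
  then show ?thesis
    using assms(2) by (simp add: walk_iff_successively hd_rev last_rev)
qed

lemma gdist_le_plen: "walk V E p x y \<Longrightarrow> gdist V E x y \<le> plen p"
  unfolding gdist_def by (rule Least_le) auto

lemma shortest_walk_exists:
  assumes "connected_graph V E" and "x \<in> V" "y \<in> V"
  obtains p where "walk V E p x y" "plen p = gdist V E x y"
proof -
  obtain p where "walk V E p x y"
    using assms unfolding connected_graph_def by blast
  then have "\<exists>q. walk V E q x y \<and> plen q = gdist V E x y"
    unfolding gdist_def by - (rule LeastI_ex, blast)
  then show ?thesis
    using that by blast
qed

lemma gdist_self: "x \<in> V \<Longrightarrow> gdist V E x x = 0"
  using gdist_le_plen[of V E "[x]" x x] by (simp add: walk_def plen_def)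

lemma gdist_triangle:
  assumes "connected_graph V E" and "x \<in> V" "y \<in> V" "z \<in> V"
  shows "gdist V E x z \<le> gdist V E x y + gdist V E y z"
proof -
  obtain p where p: "walk V E p x y" "plen p = gdist V E x y"
    by (rule shortest_walk_exists[OF assms(1-3)])
  obtain q where q: "walk V E q y z" "plen q = gdist V E y z"
    by (rule shortest_walk_exists[OF assms(1,3,4)])
  have "gdist V E x z \<le> plen (p @ tl q)"
    by (rule gdist_le_plen[OF walk_append[OF p(1) q(1)]])
  also have "\<dots> = plen p + plen q"
    using p(1) q(1) by (intro plen_append_tl) (auto simp: walk_def)
  finally show ?thesis
    using p(2) q(2) by simp
qed

lemma gdist_commute:
  assumes "sym E" and "connected_graph V E" and "x \<in> V" "y \<in> V"
  shows "gdist V E x y = gdist V E y x"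
proof -
  have "gdist V E a b \<le> gdist V E b a" if ab: "a \<in> V" "b \<in> V" for a b
  proof -
    obtain p where p: "walk V E p b a" "plen p = gdist V E b a"
      by (rule shortest_walk_exists[OF assms(2) ab(2,1)])
    have "gdist V E a b \<le> plen (rev p)"
      by (rule gdist_le_plen[OF walk_rev[OF assms(1) p(1)]])
    then show ?thesis
      using p(2) by (simp add: plen_def)
  qed
  then show ?thesis
    using assms(3,4) by (simp add: order_antisym)
qed

lemma meta_walk_iff_successively:
  "meta_walk V E R q r r' \<longleftrightarrow>
     q \<noteq> [] \<and> hd q = r \<and> last q = r' \<and> set q \<subseteq> R \<and> successively (meta_edge V E R) q"
  by (simp add: meta_walk_def successively_conv_nth)

lemma meta_walk_Cons_Cons:
  "meta_walk V E R (a # b # q) r r' \<longleftrightarrow>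
     a = r \<and> a \<in> R \<and> meta_edge V E R a b \<and> meta_walk V E R (b # q) b r'"
  by (auto simp: meta_walk_iff_successively)

lemma meta_walk_weight_Cons_Cons:
  "meta_walk_weight V E (a # b # q) = meta_weight V E a b + meta_walk_weight V E (b # q)"
  unfolding meta_walk_weight_def by (simp add: sum.lessThan_Suc_shift del: sum.lessThan_Suc)

lemma meta_walk_ends_in:
  assumes "meta_walk V E R q r r'"
  shows "r \<in> R" and "r' \<in> R"
proof -
  have "q \<noteq> []" "set q \<subseteq> R" "hd q = r" "last q = r'"
    using assms by (simp_all add: meta_walk_def)
  moreover from \<open>q \<noteq> []\<close> have "hd q \<in> set q" "last q \<in> set q"
    by simp_all
  ultimately show "r \<in> R" "r' \<in> R"
    by auto
qed

lemma gdist_le_meta_walk_weight: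
  assumes "connected_graph V E" and "R \<subseteq> V" and "meta_walk V E R q r r'"
  shows "gdist V E r r' \<le> meta_walk_weight V E q"
  using assms(3)
proof (induction q arbitrary: r rule: induct_list012)
  case 1
  then show ?case by (simp add: meta_walk_def)
next
  case (2 a)
  then show ?case
    using assms(2) by (auto simp: meta_walk_def gdist_self)
next
  case (3 a b q)
  have "a = r" "r \<in> R" and tail: "meta_walk V E R (b # q) b r'"
    using "3.prems" by (auto simp: meta_walk_Cons_Cons)
  moreover have "b \<in> R" "r' \<in> R"
    using meta_walk_ends_in[OF tail] by simp_all
  ultimately have "r \<in> V" "b \<in> V" "r' \<in> V"
    using assms(2) by auto
  then have "gdist V E r r' \<le> gdist V E r b + gdist V E b r'"
    by (rule gdist_triangle[OF assms(1)])
  also have "\<dots> \<le> meta_weight V E r b + meta_walk_weight V E (b # q)"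
    using "3.IH"(2)[OF tail] by (simp add: meta_weight_def)
  finally show ?case
    using \<open>a = r\<close> by (simp add: meta_walk_weight_Cons_Cons)
qed

lemma gdist_le_meta_dist:
  assumes "connected_graph V E" and "R \<subseteq> V"
  shows "enat (gdist V E r r') \<le> meta_dist V E R r r'"
  unfolding meta_dist_def
  by (rule Inf_greatest) (auto intro: gdist_le_meta_walk_weight[OF assms])

lemma plabel_memD: "(r, d) \<in> plabel V E R u \<Longrightarrow> r \<in> R \<and> d = gdist V E u r"
  by (simp add: plabel_def split: if_splits)

theorem mainTheorem1:
  fixes V :: "'a set" and E :: "('a \<times> 'a) set" and R :: "'a set" and u v :: 'a
  assumes "finite_simple_graph V E"
    and "connected_graph V E"
    and "R \<subseteq> V"
    and "u \<in> V" and "v \<in> V"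
  shows "dtop V E R u v \<ge> enat (gdist V E u v)"
  unfolding dtop_def
proof (rule Inf_greatest, clarify)
  fix r du r' dv
  assume lu: "(r, du) \<in> plabel V E R u" and lv: "(r', dv) \<in> plabel V E R v"
  have r: "r \<in> V" "du = gdist V E u r"
    using plabel_memD[OF lu] assms(3) by auto
  have r': "r' \<in> V" "dv = gdist V E v r'"
    using plabel_memD[OF lv] assms(3) by auto
  have "sym E"
    using assms(1) by (simp add: finite_simple_graph_def)
  have "gdist V E u v \<le> gdist V E u r + gdist V E r v"
    using gdist_triangle[OF assms(2) assms(4) r(1) assms(5)] .
  also have "\<dots> \<le> gdist V E u r + (gdist V E r r' + gdist V E r' v)"
    using gdist_triangle[OF assms(2) r(1) r'(1) assms(5)] by simp
  also have "gdist V E r' v = gdist V E v r'"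
    using gdist_commute[OF \<open>sym E\<close> assms(2) r'(1) assms(5)] .
  finally have "gdist V E u v \<le> du + gdist V E r r' + dv"
    using r(2) r'(2) by simp
  then have "enat (gdist V E u v) \<le> enat du + enat (gdist V E r r') + enat dv"
    by simp
  also have "\<dots> \<le> enat du + meta_dist V E R r r' + enat dv"
    using gdist_le_meta_dist[OF assms(2,3)] by (intro add_mono) auto
  finally show "enat (gdist V E u v) \<le> enat du + meta_dist V E R r r' + enat dv" .
qed

end
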